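(* For all integers $n\ge 3$ and $1<k<n$, the girth of $G=H_B(n,k)$ is $4$.
   Context: Fix integers $n\ge 2$ and $1\le k<n$ and positive real numbers $x_1<x_2<\dots<x_n$. Let $\mathscr{B}_n=\{\pm x_1,\pm x_2,\dots,\pm x_{n-1},x_n\}$ (so $-x_n\notin\mathscr{B}_n$). Let $\phi(\mathscr{B}_n)$ be the family of all nonempty subsets $S\subseteq\mathscr{B}_n$ whose elements have pairwise distinct absolute values and whose element of largest absolute value is positive. Let $\mathscr{B}_n^+=\{x_1,\dots,x_n\}$, let $V_1$ be the set of all $k$-element subsets of $\mathscr{B}_n^+$, and let $V_2=\phi(\mathscr{B}_n)\setminus V_1$. For $A\in\phi(\mathscr{B}_n)$ put $A^\dagger=\{|a|:a\in A\}$. The bipartite Kneser B type-$k$ graph $H_B(n,k)$ is the simple graph with vertex set $V_1\cup V_2$ in which $X\in V_1$ and $Y\in V_2$ are adjacent if and only if $X\subseteq Y^\dagger$ or $Y^\dagger\subseteq X$, and there are no other edges. The girth is the length of a shortest cycle. *)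

theory Defs
  imports Main "HOL-Library.Extended_Nat"
begin

text \<open>The girth is
the infimum (in enat) of the cycle lengths (infinity if acyclic).\<close>

definition is_cycle :: "'a set \<Rightarrow> ('a \<Rightarrow> 'a \<Rightarrow> bool) \<Rightarrow> 'a list \<Rightarrow> bool" where
  "is_cycle V E vs \<longleftrightarrow> length vs \<ge> 3 \<and> distinct vs \<and> set vs \<subseteq> V \<and>
     (\<forall>i < length vs. E (vs ! i) (vs ! ((i + 1) mod length vs)))"

definition girth :: "'a set \<Rightarrow> ('a \<Rightarrow> 'a \<Rightarrow> bool) \<Rightarrow> enat" where
  "girth V E = (INF vs \<in> {vs. is_cycle V E vs}. enat (length vs))"

definition Bn :: "nat \<Rightarrow> (nat \<Rightarrow> real) \<Rightarrow> real set" where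
  "Bn n x = {x i | i. 1 \<le> i \<and> i \<le> n} \<union> {- x i | i. 1 \<le> i \<and> i \<le> n - 1}"

definition Bn_plus :: "nat \<Rightarrow> (nat \<Rightarrow> real) \<Rightarrow> real set" where
  "Bn_plus n x = {x i | i. 1 \<le> i \<and> i \<le> n}"

definition phi :: "real set \<Rightarrow> real set set" where
  "phi B = {S. S \<noteq> {} \<and> S \<subseteq> B \<and> inj_on abs S \<and>
               (\<forall>a \<in> S. \<bar>a\<bar> = Max (abs ` S) \<longrightarrow> a > 0)}"

definition HB_V1 :: "nat \<Rightarrow> nat \<Rightarrow> (nat \<Rightarrow> real) \<Rightarrow> real set set" where
  "HB_V1 n k x = {X. X \<subseteq> Bn_plus n x \<and> card X = k}"

definition HB_V2 :: "nat \<Rightarrow> nat \<Rightarrow> (nat \<Rightarrow> real) \<Rightarrow> real set set" where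
  "HB_V2 n k x = phi (Bn n x) - HB_V1 n k x"

definition HB_vertices :: "nat \<Rightarrow> nat \<Rightarrow> (nat \<Rightarrow> real) \<Rightarrow> real set set" where
  "HB_vertices n k x = HB_V1 n k x \<union> HB_V2 n k x"

definition HB_adj :: "nat \<Rightarrow> nat \<Rightarrow> (nat \<Rightarrow> real) \<Rightarrow> real set \<Rightarrow> real set \<Rightarrow> bool" where
  "HB_adj n k x X Y \<longleftrightarrow>
     (X \<in> HB_V1 n k x \<and> Y \<in> HB_V2 n k x \<and> (X \<subseteq> abs ` Y \<or> abs ` Y \<subseteq> X)) \<or>
     (Y \<in> HB_V1 n k x \<and> X \<in> HB_V2 n k x \<and> (Y \<subseteq> abs ` X \<or> abs ` X \<subseteq> Y))"

end

theory Submission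
  imports Defs
begin

text \<open>Every edge of \<open>H_B(n,k)\<close> joins \<open>V\<^sub>1\<close> to \<open>V\<^sub>2\<close>, so the graph has no odd cycle and in
  particular no triangle.  For \<open>1 < k < n\<close> the sets \<open>{x\<^sub>1..x\<^sub>k} \<subseteq> {x\<^sub>1..x\<^sub>k\<^sub>+\<^sub>1} \<supseteq> {x\<^sub>2..x\<^sub>k\<^sub>+\<^sub>1} \<supseteq> {x\<^sub>2..x\<^sub>k}\<close>
  alternate between \<open>V\<^sub>1\<close> and \<open>V\<^sub>2\<close> and close up into a 4-cycle.\<close>

lemma girth_le_cycle_length:
  assumes "is_cycle V E vs"
  shows "girth V E \<le> enat (length vs)"
  unfolding girth_def using assms by (auto intro: INF_lower)

lemma is_cycle_length_neq_3_if_bipartite: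
  fixes P :: "'a \<Rightarrow> bool"
  assumes bip: "\<And>u v. E u v \<Longrightarrow> P u \<noteq> P v" and cyc: "is_cycle V E vs"
  shows "length vs \<noteq> 3"
proof
  assume len: "length vs = 3"
  with cyc have edge: "E (vs ! i) (vs ! ((i + 1) mod 3))" if "i < 3" for i
    using that unfolding is_cycle_def by simp
  have "P (vs ! 0) \<noteq> P (vs ! 1)" "P (vs ! 1) \<noteq> P (vs ! 2)" "P (vs ! 2) \<noteq> P (vs ! 0)"
    using bip[OF edge[of 0]] bip[OF edge[of 1]] bip[OF edge[of 2]]
    by (simp_all add: numeral_2_eq_2)
  then show False by blast
qed

lemma girth_eq_4_if_bipartite:
  fixes P :: "'a \<Rightarrow> bool"
  assumes bip: "\<And>u v. E u v \<Longrightarrow> P u \<noteq> P v" and cyc: "is_cycle V E [a, b, c, d]"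
  shows "girth V E = 4"
proof (rule antisym)
  have "girth V E \<le> enat (length [a, b, c, d])"
    by (rule girth_le_cycle_length[OF cyc])
  also have "\<dots> = 4"
    by (simp add: numeral_eq_enat eval_nat_numeral)
  finally show "girth V E \<le> 4" .
  have "4 \<le> length ws" if "is_cycle V E ws" for ws
    using is_cycle_length_neq_3_if_bipartite[of E P V ws, OF bip that] that
    unfolding is_cycle_def by linarith
  then show "4 \<le> girth V E"
    unfolding girth_def by (auto intro!: INF_greatest simp: numeral_eq_enat)
qed

lemma is_cycle_4I:
  assumes "distinct [a, b, c, d]" "{a, b, c, d} \<subseteq> V"
    and "E a b" "E b c" "E c d" "E d a"
  shows "is_cycle V E [a, b, c, d]"
proof -
  have "E ([a, b, c, d] ! i) ([a, b, c, d] ! ((i + 1) mod 4))" if "i < 4" for i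
  proof -
    from that have "i = 0 \<or> i = 1 \<or> i = 2 \<or> i = 3" by arith
    then show ?thesis using assms(3-6) by auto
  qed
  with assms(1,2) show ?thesis unfolding is_cycle_def by simp
qed

lemma HB_adj_sides_differ:
  assumes "HB_adj n k x X Y"
  shows "(X \<in> HB_V1 n k x) \<noteq> (Y \<in> HB_V1 n k x)"
  using assms unfolding HB_adj_def HB_V2_def by auto

lemma HB_adj_commute: "HB_adj n k x X Y \<longleftrightarrow> HB_adj n k x Y X"
  unfolding HB_adj_def by blast

lemma HB_adj_of_positive_nested:
  assumes "X \<in> HB_V1 n k x" "Y \<in> HB_V2 n k x" "\<forall>a\<in>Y. 0 < a" "X \<subseteq> Y \<or> Y \<subseteq> X"
  shows "HB_adj n k x X Y"
proof -
  have "abs ` Y = Y"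
    using assms(3) by (force simp: image_iff)
  with assms show ?thesis unfolding HB_adj_def by simp
qed

lemma positive_subset_in_phi:
  assumes "S \<subseteq> Bn_plus n x" "S \<noteq> {}" "\<forall>a\<in>S. 0 < a"
  shows "S \<in> phi (Bn n x)"
proof -
  have "Bn_plus n x \<subseteq> Bn n x" unfolding Bn_plus_def Bn_def by auto
  moreover have "inj_on abs S" using assms(3) by (intro inj_onI) (metis abs_of_pos)
  ultimately show ?thesis using assms unfolding phi_def by auto
qed

context
  fixes n k :: nat and x :: "nat \<Rightarrow> real"
  assumes x_pos: "\<forall>i. 1 \<le> i \<and> i \<le> n \<longrightarrow> 0 < x i"
    and x_mono: "strict_mono_on {1..n} x"
begin

lemma card_x_interval:
  assumes "1 \<le> a" "b \<le> n"
  shows "card (x ` {a..b}) = Suc b - a"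
proof -
  have "inj_on x {a..b}"
    by (rule inj_on_subset[OF strict_mono_on_imp_inj_on[OF x_mono]]) (use assms in auto)
  then show ?thesis by (simp add: card_image)
qed

lemma x_interval_positive:
  assumes "1 \<le> a" "b \<le> n"
  shows "\<forall>v\<in>x ` {a..b}. 0 < v"
  using x_pos assms by auto

lemma x_interval_in_phi:
  assumes "1 \<le> a" "a \<le> b" "b \<le> n"
  shows "x ` {a..b} \<in> phi (Bn n x)"
  using assms x_interval_positive[of a b]
  by (intro positive_subset_in_phi) (auto simp: Bn_plus_def)

lemma x_interval_in_V1:
  assumes "1 \<le> a" "b \<le> n" "Suc b - a = k"
  shows "x ` {a..b} \<in> HB_V1 n k x"
  using assms card_x_interval[of a b] unfolding HB_V1_def Bn_plus_def by auto

lemma x_interval_in_V2: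
  assumes "1 \<le> a" "a \<le> b" "b \<le> n" "Suc b - a \<noteq> k"
  shows "x ` {a..b} \<in> HB_V2 n k x"
  using x_interval_in_phi[OF assms(1-3)] card_x_interval[OF assms(1,3)] assms(4)
  unfolding HB_V2_def HB_V1_def by simp

lemma HB_has_4_cycle:
  assumes "1 < k" "k < n"
  shows "is_cycle (HB_vertices n k x) (HB_adj n k x)
           [x ` {1..k}, x ` {1..Suc k}, x ` {2..Suc k}, x ` {2..k}]"
proof -
  have V1: "x ` {1..k} \<in> HB_V1 n k x" "x ` {2..Suc k} \<in> HB_V1 n k x"
    using assms by (simp_all add: x_interval_in_V1)
  have V2: "x ` {1..Suc k} \<in> HB_V2 n k x" "x ` {2..k} \<in> HB_V2 n k x"
    using assms by (simp_all add: x_interval_in_V2)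
  have pos: "\<forall>v\<in>x ` {1..Suc k}. 0 < v" "\<forall>v\<in>x ` {2..k}. 0 < v"
    using assms x_pos by auto
  have card: "card (x ` {1..k}) = k" "card (x ` {1..Suc k}) = Suc k"
      "card (x ` {2..Suc k}) = k" "card (x ` {2..k}) = k - 1"
    using assms by (simp_all add: card_x_interval)
  have "x 1 \<notin> x ` {2..Suc k}"
  proof
    assume "x 1 \<in> x ` {2..Suc k}"
    then obtain j where "j \<in> {2..Suc k}" "x 1 = x j" by blast
    with assms strict_mono_onD[OF x_mono, of 1 j] show False by simp
  qed
  moreover have "x 1 \<in> x ` {1..k}"
    using assms by simp
  ultimately have "x ` {1..k} \<noteq> x ` {2..Suc k}"
    by blast
  moreover have "x ` {1..k} \<noteq> x ` {1..Suc k}" "x ` {1..k} \<noteq> x ` {2..k}"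
      "x ` {1..Suc k} \<noteq> x ` {2..Suc k}" "x ` {1..Suc k} \<noteq> x ` {2..k}"
      "x ` {2..Suc k} \<noteq> x ` {2..k}"
    using card assms by (intro notI, simp)+
  ultimately have "distinct [x ` {1..k}, x ` {1..Suc k}, x ` {2..Suc k}, x ` {2..k}]"
    by simp
  moreover have "{x ` {1..k}, x ` {1..Suc k}, x ` {2..Suc k}, x ` {2..k}} \<subseteq> HB_vertices n k x"
    using V1 V2 unfolding HB_vertices_def by blast
  moreover have "HB_adj n k x (x ` {1..k}) (x ` {1..Suc k})"
    by (rule HB_adj_of_positive_nested[OF V1(1) V2(1) pos(1)]) (auto intro!: image_mono)
  moreover have "HB_adj n k x (x ` {1..Suc k}) (x ` {2..Suc k})"
    unfolding HB_adj_commute[of n k x "x ` {1..Suc k}"]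
    by (rule HB_adj_of_positive_nested[OF V1(2) V2(1) pos(1)]) (auto intro!: image_mono)
  moreover have "HB_adj n k x (x ` {2..Suc k}) (x ` {2..k})"
    by (rule HB_adj_of_positive_nested[OF V1(2) V2(2) pos(2)]) (auto intro!: image_mono)
  moreover have "HB_adj n k x (x ` {2..k}) (x ` {1..k})"
    unfolding HB_adj_commute[of n k x "x ` {2..k}"]
    by (rule HB_adj_of_positive_nested[OF V1(1) V2(2) pos(2)]) (auto intro!: image_mono)
  ultimately show ?thesis
    by (rule is_cycle_4I)
qed

end

theorem mainTheorem8:
  fixes n k :: nat and x :: "nat \<Rightarrow> real"
  assumes "n \<ge> 3" and "1 < k" and "k < n"
    and "\<forall>i. 1 \<le> i \<and> i \<le> n \<longrightarrow> 0 < x i"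
    and "strict_mono_on {1..n} x"
  shows "girth (HB_vertices n k x) (HB_adj n k x) = 4"
proof -
  have "(X \<in> HB_V1 n k x) \<noteq> (Y \<in> HB_V1 n k x)" if "HB_adj n k x X Y" for X Y
    using that by (rule HB_adj_sides_differ)
  moreover note HB_has_4_cycle[OF assms(4,5,2,3)]
  ultimately show ?thesis
    by (rule girth_eq_4_if_bipartite)
qed

end
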